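(* Let $N\ge1$, $K\ge2$ be integers and let $\alpha\ge\frac{2(K-1)}{K}$. Then for every pure strategy $s\in S$, the profile $(s,s)$ is a Nash equilibrium of $\mathcal{B}_\alpha(N,K)$.
   Context: Fix integers $N\ge1$, $K\ge2$ and a real number $\alpha$. The Colonel Blotto game $\mathcal{B}_\alpha(N,K)$ is the two-player simultaneous-move game with players $A,B$, each with pure strategy set $S=\{s\in\{0,1,\ldots,N\}^K:\sum_{k=1}^K s_k=N\}$, in which the payoff of player $i$ at the pure profile $(s^i,s^{-i})$ is $\pi^i(s^i,s^{-i})=\sum_{k=1}^K\big(\mathbf 1[s^i_k>s^{-i}_k]+\tfrac{\alpha}{2}\mathbf 1[s^i_k=s^{-i}_k]\big)$. Mixed strategies are probability distributions on $S$, with expected payoffs under independent randomization; a Nash equilibrium is a mixed profile from which no unilateral deviation raises a player's expected payoff. *)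

theory Defs
  imports Complex_Main
begin

definition blotto_S :: "nat \<Rightarrow> nat \<Rightarrow> (nat \<Rightarrow> nat) set" where
  "blotto_S N K = {s. (\<forall>k\<ge>K. s k = 0) \<and> (\<Sum>k<K. s k) = N}"

definition blotto_payoff :: "nat \<Rightarrow> real \<Rightarrow> (nat \<Rightarrow> nat) \<Rightarrow> (nat \<Rightarrow> nat) \<Rightarrow> real" where
  "blotto_payoff K \<alpha> x y =
     (\<Sum>k<K. (if x k > y k then 1 else 0) + \<alpha> / 2 * (if x k = y k then 1 else 0))"

definition blotto_mixed :: "nat \<Rightarrow> nat \<Rightarrow> ((nat \<Rightarrow> nat) \<Rightarrow> real) set" where
  "blotto_mixed N K = {\<sigma>. (\<forall>x. \<sigma> x \<ge> 0) \<and> (\<forall>x. x \<notin> blotto_S N K \<longrightarrow> \<sigma> x = 0)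
                          \<and> (\<Sum>x\<in>blotto_S N K. \<sigma> x) = 1}"

definition payoff_A :: "nat \<Rightarrow> nat \<Rightarrow> real \<Rightarrow> ((nat \<Rightarrow> nat) \<Rightarrow> real) \<Rightarrow> ((nat \<Rightarrow> nat) \<Rightarrow> real) \<Rightarrow> real" where
  "payoff_A N K \<alpha> \<sigma> \<tau> =
     (\<Sum>a\<in>blotto_S N K. \<Sum>b\<in>blotto_S N K. \<sigma> a * \<tau> b * blotto_payoff K \<alpha> a b)"

definition payoff_B :: "nat \<Rightarrow> nat \<Rightarrow> real \<Rightarrow> ((nat \<Rightarrow> nat) \<Rightarrow> real) \<Rightarrow> ((nat \<Rightarrow> nat) \<Rightarrow> real) \<Rightarrow> real" where
  "payoff_B N K \<alpha> \<sigma> \<tau> =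
     (\<Sum>a\<in>blotto_S N K. \<Sum>b\<in>blotto_S N K. \<sigma> a * \<tau> b * blotto_payoff K \<alpha> b a)"

definition blotto_nash :: "nat \<Rightarrow> nat \<Rightarrow> real \<Rightarrow> ((nat \<Rightarrow> nat) \<Rightarrow> real) \<Rightarrow> ((nat \<Rightarrow> nat) \<Rightarrow> real) \<Rightarrow> bool" where
  "blotto_nash N K \<alpha> \<sigma> \<tau> \<longleftrightarrow>
     \<sigma> \<in> blotto_mixed N K \<and> \<tau> \<in> blotto_mixed N K \<and>
     (\<forall>\<sigma>'\<in>blotto_mixed N K. payoff_A N K \<alpha> \<sigma>' \<tau> \<le> payoff_A N K \<alpha> \<sigma> \<tau>) \<and>
     (\<forall>\<tau>'\<in>blotto_mixed N K. payoff_B N K \<alpha> \<sigma> \<tau>' \<le> payoff_B N K \<alpha> \<sigma> \<tau>)"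

definition pure_strategy :: "(nat \<Rightarrow> nat) \<Rightarrow> ((nat \<Rightarrow> nat) \<Rightarrow> real)" where
  "pure_strategy s = (\<lambda>x. if x = s then 1 else 0)"

end

theory Submission
  imports Defs
begin

text \<open>Against a pure strategy s, every other allocation x with the same total must lose
  some battlefield, since it cannot dominate s componentwise. So x wins at most K - 1
  battlefields, each worth at most max 1 (\<alpha>/2), while s against itself ties all K
  battlefields for K\<alpha>/2; the bound on \<alpha> makes the latter at least the former.
  Expected payoffs against a pure strategy are averages of such pure payoffs.\<close>

lemma finite_blotto_S: "finite (blotto_S N K)"
proof -
  let ?F = "{f :: nat \<Rightarrow> nat. \<forall>x. (x \<in> {..<K} \<longrightarrow> f x \<in> {..N}) \<and> (x \<notin> {..<K} \<longrightarrow> f x = 0)}"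
  have "blotto_S N K \<subseteq> ?F"
  proof
    fix f assume f: "f \<in> blotto_S N K"
    have "f x \<le> N" if "x < K" for x
    proof -
      have "f x \<le> (\<Sum>k<K. f k)" using that by (intro member_le_sum) auto
      then show ?thesis using f by (simp add: blotto_S_def)
    qed
    then show "f \<in> ?F" using f by (auto simp: blotto_S_def)
  qed
  moreover have "finite ?F" by (rule finite_set_of_finite_funs) auto
  ultimately show ?thesis by (rule finite_subset)
qed

lemma blotto_S_exists_less:
  assumes "x \<in> blotto_S N K" "s \<in> blotto_S N K" "x \<noteq> s"
  shows "\<exists>k<K. x k < s k"
proof (rule ccontr)
  assume "\<not> ?thesis"
  then have le: "\<forall>k<K. s k \<le> x k" by auto
  have "\<forall>k<K. s k = x k"
  proof (rule ccontr)
    assume "\<not> (\<forall>k<K. s k = x k)"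
    then obtain k where "k < K" "s k < x k" using le by force
    then have "(\<Sum>k<K. s k) < (\<Sum>k<K. x k)" using le by (intro sum_strict_mono_ex1) auto
    then show False using assms(1,2) by (simp add: blotto_S_def)
  qed
  moreover have "\<forall>k\<ge>K. s k = x k" using assms(1,2) by (simp add: blotto_S_def)
  ultimately have "x = s" by (metis ext not_le)
  then show False using assms(3) by simp
qed

lemma blotto_payoff_self: "blotto_payoff K \<alpha> s s = real K * \<alpha> / 2"
  by (simp add: blotto_payoff_def)

lemma blotto_payoff_le_of_loss:
  assumes "k0 < K" "x k0 < y k0" "\<alpha> \<ge> 0"
  shows "blotto_payoff K \<alpha> x y \<le> (real K - 1) * max 1 (\<alpha> / 2)"
proof -
  define f where "f k = (if x k > y k then 1 else 0) + \<alpha> / 2 * (if x k = y k then 1 else 0)" for k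
  have "blotto_payoff K \<alpha> x y = f k0 + (\<Sum>k\<in>{..<K} - {k0}. f k)"
    using assms(1) by (simp add: blotto_payoff_def f_def sum.remove[of _ k0])
  also have "\<dots> \<le> 0 + (\<Sum>k\<in>{..<K} - {k0}. max 1 (\<alpha> / 2))"
    using assms by (intro add_mono sum_mono) (auto simp: f_def)
  also have "\<dots> = (real K - 1) * max 1 (\<alpha> / 2)"
    using assms(1) by (simp add: of_nat_diff)
  finally show ?thesis .
qed

lemma blotto_payoff_le_self:
  assumes "x \<in> blotto_S N K" "s \<in> blotto_S N K"
    and "K \<ge> 2" "\<alpha> \<ge> 2 * (real K - 1) / real K"
  shows "blotto_payoff K \<alpha> x s \<le> blotto_payoff K \<alpha> s s"
proof (cases "x = s")
  case False
  then obtain k0 where "k0 < K" "x k0 < s k0" using blotto_S_exists_less assms(1,2) by blast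
  have "2 * (real K - 1) / real K \<ge> 0" using assms(3) by simp
  then have "\<alpha> \<ge> 0" using assms(4) by linarith
  have "\<alpha> * real K \<ge> 2 * (real K - 1)" using assms(3,4) by (simp add: divide_le_eq)
  then have "(real K - 1) * max 1 (\<alpha> / 2) \<le> real K * \<alpha> / 2"
    using \<open>\<alpha> \<ge> 0\<close> by (auto simp: max_def field_simps)
  then show ?thesis
    using blotto_payoff_le_of_loss[of k0 K x s \<alpha>] \<open>k0 < K\<close> \<open>x k0 < s k0\<close> \<open>\<alpha> \<ge> 0\<close> blotto_payoff_self
    by (metis order_trans)
qed simp

lemma pure_strategy_mixed:
  assumes "s \<in> blotto_S N K"
  shows "pure_strategy s \<in> blotto_mixed N K"
  using assms finite_blotto_S by (simp add: blotto_mixed_def pure_strategy_def sum.delta)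

lemma sum_pure_strategy:
  assumes "finite A" "s \<in> A"
  shows "(\<Sum>b\<in>A. pure_strategy s b * g b) = g s"
proof -
  have "(\<Sum>b\<in>A. pure_strategy s b * g b) = (\<Sum>b\<in>A. if b = s then g b else 0)"
    by (rule sum.cong) (auto simp: pure_strategy_def)
  also have "\<dots> = g s" using assms by (simp add: sum.delta')
  finally show ?thesis .
qed

lemma payoff_A_pure_right:
  assumes "s \<in> blotto_S N K"
  shows "payoff_A N K \<alpha> \<sigma> (pure_strategy s) = (\<Sum>a\<in>blotto_S N K. \<sigma> a * blotto_payoff K \<alpha> a s)"
  unfolding payoff_A_def
proof (rule sum.cong[OF refl])
  fix a
  have "(\<Sum>b\<in>blotto_S N K. \<sigma> a * pure_strategy s b * blotto_payoff K \<alpha> a b)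
      = \<sigma> a * (\<Sum>b\<in>blotto_S N K. pure_strategy s b * blotto_payoff K \<alpha> a b)"
    by (simp add: sum_distrib_left mult.assoc)
  also have "\<dots> = \<sigma> a * blotto_payoff K \<alpha> a s"
    using assms finite_blotto_S by (simp add: sum_pure_strategy)
  finally show "(\<Sum>b\<in>blotto_S N K. \<sigma> a * pure_strategy s b * blotto_payoff K \<alpha> a b)
      = \<sigma> a * blotto_payoff K \<alpha> a s" .
qed

lemma payoff_B_pure_left:
  assumes "s \<in> blotto_S N K"
  shows "payoff_B N K \<alpha> (pure_strategy s) \<tau> = (\<Sum>b\<in>blotto_S N K. \<tau> b * blotto_payoff K \<alpha> b s)"
proof -
  have "payoff_B N K \<alpha> (pure_strategy s) \<tau>
      = (\<Sum>a\<in>blotto_S N K. pure_strategy s a * (\<Sum>b\<in>blotto_S N K. \<tau> b * blotto_payoff K \<alpha> b a))"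
    unfolding payoff_B_def by (simp add: sum_distrib_left mult.assoc)
  also have "\<dots> = (\<Sum>b\<in>blotto_S N K. \<tau> b * blotto_payoff K \<alpha> b s)"
    using finite_blotto_S assms by (rule sum_pure_strategy)
  finally show ?thesis .
qed

lemma mixed_average_le:
  assumes "\<sigma> \<in> blotto_mixed N K" "\<And>a. a \<in> blotto_S N K \<Longrightarrow> f a \<le> c"
  shows "(\<Sum>a\<in>blotto_S N K. \<sigma> a * f a) \<le> c"
proof -
  have "(\<Sum>a\<in>blotto_S N K. \<sigma> a * f a) \<le> (\<Sum>a\<in>blotto_S N K. \<sigma> a * c)"
    using assms by (intro sum_mono mult_left_mono) (auto simp: blotto_mixed_def)
  also have "\<dots> = c"
    using assms(1) by (simp add: sum_distrib_right[symmetric] blotto_mixed_def)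
  finally show ?thesis .
qed

theorem proposition6:
  fixes N K :: nat and \<alpha> :: real and s :: "nat \<Rightarrow> nat"
  assumes "N \<ge> 1" and "K \<ge> 2"
    and "\<alpha> \<ge> 2 * (real K - 1) / real K"
    and "s \<in> blotto_S N K"
  shows "blotto_nash N K \<alpha> (pure_strategy s) (pure_strategy s)"
proof -
  have deviation: "(\<Sum>a\<in>blotto_S N K. \<sigma> a * blotto_payoff K \<alpha> a s) \<le> blotto_payoff K \<alpha> s s"
    if "\<sigma> \<in> blotto_mixed N K" for \<sigma>
    using that blotto_payoff_le_self[OF _ assms(4,2,3)] by (rule mixed_average_le)
  have equilibrium: "(\<Sum>a\<in>blotto_S N K. pure_strategy s a * blotto_payoff K \<alpha> a s)
      = blotto_payoff K \<alpha> s s"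
    using finite_blotto_S assms(4) by (rule sum_pure_strategy)
  show ?thesis
    unfolding blotto_nash_def payoff_A_pure_right[OF assms(4)] payoff_B_pure_left[OF assms(4)]
    using pure_strategy_mixed[OF assms(4)] deviation equilibrium by simp
qed

end
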